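(* For $a>0$ and $y>1$ let $\bar F(y,a)=y^{\sqrt a}\exp\!\big(-a(y^{1/\sqrt a}-1)\big)$. Then for every fixed $y>1$, the map $a\mapsto \bar F(y,a)$ is strictly increasing on $(0,\infty)$. Equivalently, if $Y_a=(1+X_a)^{\sqrt a}$ where $X_a$ has density $a t\,e^{-a t}(1+t)^{a-1}$ on $t>0$, then the family $\{Y_a\}_{a>0}$ is strictly increasing in the usual stochastic order: $\Pr\{Y_a>y\}<\Pr\{Y_b>y\}$ for all $y>1$ whenever $0<a<b$. *)

theory Defs
  imports Complex_Main
begin

definition Fbar :: "real \<Rightarrow> real \<Rightarrow> real" where
  "Fbar y a = y powr (sqrt a) * exp (- a * (y powr (1 / sqrt a) - 1))"

end

theory Submission
  imports Defs
begin

(* Write L = ln y > 0 and s = sqrt a.  Then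
     ln (Fbar y a) = s L - s^2 (exp (L/s) - 1) = L^2 * q (L/s),
   where q u = (1 + u - exp u) / u^2 is minus the normalised second-order
   Taylor remainder of exp at 0.  As a increases, L/s decreases, so the claim
   reduces to q being strictly decreasing on (0, inf).  Its derivative is
   ((2 - u) exp u - u - 2) / u^3, whose numerator vanishes at 0 and has
   derivative (1 - u) exp u - 1 < 0 for u > 0 (because exp (-u) > 1 - u). *)

lemma one_minus_times_exp_lt_one:
  fixes u :: real
  assumes "u > 0"
  shows "(1 - u) * exp u < 1"
proof -
  have "1 - u < exp (- u)"
    using exp_minus_greater[of u] assms by simp
  then have "(1 - u) * exp u < exp (- u) * exp u"
    by (simp add: mult_strict_right_mono)
  also have "\<dots> = 1"
    by (simp add: exp_add[symmetric])
  finally show ?thesis .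
qed

lemma two_minus_times_exp_lt:
  fixes u :: real
  assumes "u > 0"
  shows "(2 - u) * exp u < u + 2"
proof -
  let ?k = "\<lambda>x::real. (2 - x) * exp x - x - 2"
  have "?k u < ?k 0"
  proof (rule DERIV_neg_imp_decreasing_open[OF assms])
    fix x :: real
    assume x: "0 < x" "x < u"
    have "DERIV ?k x :> (2 - x) * exp x - exp x - 1"
      by (auto intro!: derivative_eq_intros simp: algebra_simps)
    moreover have "(2 - x) * exp x - exp x - 1 = (1 - x) * exp x - 1"
      by (simp add: algebra_simps)
    ultimately show "\<exists>d. DERIV ?k x :> d \<and> d < 0"
      using one_minus_times_exp_lt_one[OF x(1)] by auto
  qed (intro continuous_intros)
  then show ?thesis by simp
qed

definition exp_remainder_quot :: "real \<Rightarrow> real" where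
  "exp_remainder_quot u = (1 + u - exp u) / u\<^sup>2"

lemma exp_remainder_quot_strict_decreasing:
  fixes u v :: real
  assumes "0 < u" "u < v"
  shows "exp_remainder_quot v < exp_remainder_quot u"
  unfolding exp_remainder_quot_def
proof (rule DERIV_neg_imp_decreasing_open[OF assms(2)])
  fix x :: real
  assume "u < x" "x < v"
  then have x: "x > 0" using assms by simp
  let ?d = "((1 - exp x) * x\<^sup>2 - (1 + x - exp x) * (2 * x)) / (x\<^sup>2)\<^sup>2"
  have "DERIV (\<lambda>u. (1 + u - exp u) / u\<^sup>2) x :> ?d"
    using x by (auto intro!: derivative_eq_intros simp: power2_eq_square)
  moreover have "?d = ((2 - x) * exp x - x - 2) / x ^ 3"
    using x by (simp add: field_simps power2_eq_square power3_eq_cube)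
  moreover have "((2 - x) * exp x - x - 2) / x ^ 3 < 0"
    using two_minus_times_exp_lt[OF x] x by (simp add: divide_neg_pos)
  ultimately show "\<exists>d. DERIV (\<lambda>u. (1 + u - exp u) / u\<^sup>2) x :> d \<and> d < 0"
    by auto
next
  show "continuous_on {u..v} (\<lambda>u. (1 + u - exp u) / u\<^sup>2)"
    using assms by (intro continuous_intros) auto
qed

lemma Fbar_via_exp_remainder_quot:
  fixes y a :: real
  assumes "y > 0" "y \<noteq> 1" "a > 0"
  shows "Fbar y a = exp ((ln y)\<^sup>2 * exp_remainder_quot (ln y / sqrt a))"
proof -
  let ?L = "ln y" and ?s = "sqrt a"
  have L: "?L \<noteq> 0" using assms by simp
  have s: "?s > 0" using assms by simp
  have "Fbar y a = exp (?s * ?L) * exp (- (?s\<^sup>2) * (exp (?L / ?s) - 1))"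
    unfolding Fbar_def using assms by (simp add: powr_def)
  also have "\<dots> = exp (?s * ?L - ?s\<^sup>2 * (exp (?L / ?s) - 1))"
    by (simp add: exp_add[symmetric])
  also have "?s * ?L - ?s\<^sup>2 * (exp (?L / ?s) - 1)
      = ?L\<^sup>2 * exp_remainder_quot (?L / ?s)"
    unfolding exp_remainder_quot_def using L s
    by (simp add: field_simps power2_eq_square)
  finally show ?thesis .
qed

theorem mainTheorem5:
  fixes y :: real
  assumes "y > 1"
  shows "strict_mono_on {0<..} (\<lambda>a. Fbar y a)"
proof (rule strict_mono_onI)
  fix a b :: real
  assume a: "a \<in> {0<..}" and b: "b \<in> {0<..}" and "a < b"
  have L: "ln y > 0" using assms by simp
  have "sqrt a < sqrt b" and "sqrt a > 0" using \<open>a < b\<close> a by auto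
  then have "0 < ln y / sqrt b" and "ln y / sqrt b < ln y / sqrt a"
    using L by (auto simp: divide_strict_left_mono)
  then have "exp_remainder_quot (ln y / sqrt a) < exp_remainder_quot (ln y / sqrt b)"
    by (rule exp_remainder_quot_strict_decreasing)
  then have "(ln y)\<^sup>2 * exp_remainder_quot (ln y / sqrt a)
      < (ln y)\<^sup>2 * exp_remainder_quot (ln y / sqrt b)"
    using L by simp
  then show "Fbar y a < Fbar y b"
    using Fbar_via_exp_remainder_quot[of y] assms a b by simp
qed

end
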